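(* Let $q$ be a prime power, $7\le n\le q$, $\alpha_1,\dots,\alpha_n\in\mathbb{F}_q$ distinct, $u_1,\dots,u_n\in\mathbb{F}_q^*$, and $H\in\mathbb{F}_q^{6\times n}$ with $H_{ab}=u_b\alpha_b^{a-1}$ (so $\ker H$ has distance $7$). Then the number of $e\in\mathbb{F}_q^n$ with $|e|=4$ for which there exists $e'\in\mathbb{F}_q^n$ with $|e'|\le 3$ and $He'=He$ is at most $$\frac{(n-4)(n-5)(n-6)}{6(q-1)^3}\cdot(q-1)^4\binom{n}{4}.$$
   Context: $|e|$ denotes the Hamming weight of $e\in\mathbb{F}_q^n$. *)

theory Defs
  imports Complex_Main "HOL-Library.Cardinality"
begin

text \<open>Vectors of F_q^n are represented as functions nat => 'a vanishing outside {0..<n}.\<close>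

definition vecs :: "nat \<Rightarrow> (nat \<Rightarrow> 'a::zero) set" where
  "vecs n = {e. \<forall>i. n \<le> i \<longrightarrow> e i = 0}"

definition hweight :: "nat \<Rightarrow> (nat \<Rightarrow> 'a::zero) \<Rightarrow> nat" where
  "hweight n e = card {i \<in> {..<n}. e i \<noteq> 0}"

text \<open>Parity check matrix H with rows a = 0..5 (paper index a-1) and entries u_b * alpha_b^(a-1).\<close>

definition Hmat :: "(nat \<Rightarrow> 'a::field) \<Rightarrow> (nat \<Rightarrow> 'a) \<Rightarrow> nat \<Rightarrow> nat \<Rightarrow> 'a" where
  "Hmat u \<alpha> a b = u b * \<alpha> b ^ a"

definition syndrome :: "nat \<Rightarrow> (nat \<Rightarrow> 'a::field) \<Rightarrow> (nat \<Rightarrow> 'a) \<Rightarrow> (nat \<Rightarrow> 'a) \<Rightarrow> nat \<Rightarrow> 'a" where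
  "syndrome n u \<alpha> e a = (if a < 6 then (\<Sum>b<n. Hmat u \<alpha> a b * e b) else 0)"

end

theory Submission
  imports Defs "HOL-Computational_Algebra.Polynomial"
begin

(* The kernel of H has minimum distance 7: a kernel vector c of weight at most 6 is orthogonal
   to every polynomial of degree at most 5 evaluated at the \<alpha>'s, in particular to the one
   vanishing on all but one point of the support of c, so c = 0.
   If e has weight 4 and e' has weight at most 3 with the same syndrome, then c = e - e' is a
   nonzero kernel vector, so the supports of e and e' are disjoint of sizes 4 and 3, c has
   support exactly their union, and e is the restriction of c to supp e.  Two kernel vectors
   with the same 7-element support that agree in one coordinate coincide, so there are at most
   q - 1 of them.  Hence e is determined by (supp e, supp e', c), which leaves at most
   C(n,4) C(n-4,3) (q-1) possibilities. *)

definition support :: "nat \<Rightarrow> (nat \<Rightarrow> 'a::zero) \<Rightarrow> nat set" where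
  "support n e = {i \<in> {..<n}. e i \<noteq> 0}"

lemma finite_support [simp]: "finite (support n e)"
  by (simp add: support_def)

lemma support_subset_lessThan: "support n e \<subseteq> {..<n}"
  by (auto simp: support_def)

lemma hweight_eq_card_support: "hweight n e = card (support n e)"
  by (simp add: hweight_def support_def)

lemma support_diff_subset:
  fixes e e' :: "nat \<Rightarrow> 'a::group_add"
  shows "support n (e - e') \<subseteq> support n e \<union> support n e'"
  by (auto simp: support_def)

lemma vecs_diff: "e \<in> vecs n \<Longrightarrow> e' \<in> vecs n \<Longrightarrow> e - e' \<in> vecs n"
  for e e' :: "nat \<Rightarrow> 'a::group_add"
  by (simp add: vecs_def)

lemma vecs_eqI:
  assumes "e \<in> vecs n" "e' \<in> vecs n" "\<And>i. i < n \<Longrightarrow> e i = e' i"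
  shows "e = e'"
proof
  show "e i = e' i" for i
    using assms by (cases "i < n") (auto simp: vecs_def)
qed

lemma syndrome_diff: "syndrome n u \<alpha> (e - e') = syndrome n u \<alpha> e - syndrome n u \<alpha> e'"
  by (rule ext) (simp add: syndrome_def sum_subtractf algebra_simps)

lemma weighted_power_sums_poly_eq_0:
  fixes \<alpha> u c :: "nat \<Rightarrow> 'a::field"
  assumes ker: "\<forall>a<r. (\<Sum>b<n. u b * \<alpha> b ^ a * c b) = 0" and deg: "degree p < r"
  shows "(\<Sum>b<n. u b * c b * poly p (\<alpha> b)) = 0"
proof -
  have poly_eq: "poly p x = (\<Sum>a<r. coeff p a * x ^ a)" for x
    unfolding poly_altdef using deg
    by (intro sum.mono_neutral_left) (auto simp: coeff_eq_0)
  have "(\<Sum>b<n. u b * c b * poly p (\<alpha> b)) = (\<Sum>a<r. coeff p a * (\<Sum>b<n. u b * \<alpha> b ^ a * c b))"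
    unfolding poly_eq sum_distrib_left by (subst sum.swap) (simp add: mult_ac)
  also have "\<dots> = 0"
    using ker by simp
  finally show ?thesis .
qed

lemma weighted_power_sums_sparse_eq_0:
  fixes \<alpha> u c :: "nat \<Rightarrow> 'a::field"
  assumes inj: "inj_on \<alpha> {..<n}" and u: "\<forall>i<n. u i \<noteq> 0"
    and ker: "\<forall>a<r. (\<Sum>b<n. u b * \<alpha> b ^ a * c b) = 0"
    and sparse: "card (support n c) \<le> r" and "i < n"
  shows "c i = 0"
proof (rule ccontr)
  assume "c i \<noteq> 0"
  with \<open>i < n\<close> have i: "i \<in> support n c"
    by (simp add: support_def)
  define p where "p = (\<Prod>b\<in>support n c - {i}. [:- \<alpha> b, 1:])"
  have "degree p \<le> card (support n c - {i})"
    unfolding p_def by (rule order.trans[OF degree_prod_sum_le]) simp_all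
  also have "\<dots> < r"
    using i sparse card_gt_0_iff[of "support n c"] by (auto simp: card_Diff_singleton)
  finally have "(\<Sum>b<n. u b * c b * poly p (\<alpha> b)) = 0"
    using ker by (rule weighted_power_sums_poly_eq_0[rotated])
  moreover have "u b * c b * poly p (\<alpha> b) = 0" if "b \<in> {..<n} - {i}" for b
    using that by (cases "c b = 0") (auto simp: p_def poly_prod support_def)
  ultimately have "u i * c i * poly p (\<alpha> i) = 0"
    using \<open>i < n\<close> by (simp add: sum.remove)
  moreover have "poly p (\<alpha> i) \<noteq> 0"
    using inj \<open>i < n\<close> by (auto simp: p_def poly_prod support_def inj_on_def)
  ultimately show False
    using u \<open>i < n\<close> \<open>c i \<noteq> 0\<close> by simp
qed

lemma syndrome_eq_imp_eq:
  fixes \<alpha> u e e' :: "nat \<Rightarrow> 'a::field"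
  assumes inj: "inj_on \<alpha> {..<n}" and u: "\<forall>i<n. u i \<noteq> 0"
    and vecs: "e \<in> vecs n" "e' \<in> vecs n"
    and syn: "syndrome n u \<alpha> e = syndrome n u \<alpha> e'" and weight: "hweight n (e - e') \<le> 6"
  shows "e = e'"
proof (rule vecs_eqI[OF vecs])
  have syndrome_0: "syndrome n u \<alpha> (e - e') a = 0" for a
    using syn by (simp add: syndrome_diff)
  have "(\<Sum>b<n. u b * \<alpha> b ^ a * (e - e') b) = 0" if "a < 6" for a
    using syndrome_0[of a] that by (simp add: syndrome_def Hmat_def)
  then have ker: "\<forall>a<6. (\<Sum>b<n. u b * \<alpha> b ^ a * (e - e') b) = 0"
    by blast
  have "card (support n (e - e')) \<le> 6"
    using weight by (simp only: hweight_eq_card_support)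
  then have "(e - e') i = 0" if "i < n" for i
    using weighted_power_sums_sparse_eq_0[OF inj u ker _ that] by blast
  then show "e i = e' i" if "i < n" for i
    using that by simp
qed

lemma syndrome_eq_weight_sum_le_7:
  fixes \<alpha> u e e' :: "nat \<Rightarrow> 'a::field"
  assumes inj: "inj_on \<alpha> {..<n}" and u: "\<forall>i<n. u i \<noteq> 0"
    and vecs: "e \<in> vecs n" "e' \<in> vecs n"
    and syn: "syndrome n u \<alpha> e = syndrome n u \<alpha> e'" and "e \<noteq> e'"
    and weights: "hweight n e + hweight n e' \<le> 7"
  shows "support n e \<inter> support n e' = {}" and "hweight n e + hweight n e' = 7"
    and "support n (e - e') = support n e \<union> support n e'"
proof -
  have "7 \<le> card (support n (e - e'))"
  proof (rule ccontr)
    assume "\<not> 7 \<le> card (support n (e - e'))"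
    then have "hweight n (e - e') \<le> 6"
      by (simp add: hweight_eq_card_support)
    with syndrome_eq_imp_eq[OF inj u vecs syn] \<open>e \<noteq> e'\<close> show False
      by blast
  qed
  moreover have "card (support n (e - e')) \<le> card (support n e \<union> support n e')"
    by (simp add: card_mono support_diff_subset)
  moreover have "card (support n e \<union> support n e') + card (support n e \<inter> support n e')
      = hweight n e + hweight n e'"
    using card_Un_Int[of "support n e" "support n e'"] by (simp add: hweight_eq_card_support)
  ultimately have card_union: "card (support n e \<union> support n e') = 7"
    and card_diff: "card (support n (e - e')) = 7"
    and card_inter: "card (support n e \<inter> support n e') = 0"
    and "hweight n e + hweight n e' = 7"
    using weights by linarith+
  then show "hweight n e + hweight n e' = 7"
    by simp
  show "support n e \<inter> support n e' = {}"
    using card_inter by simp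
  show "support n (e - e') = support n e \<union> support n e'"
    using card_union card_diff by (intro card_subset_eq support_diff_subset) simp_all
qed

lemma syndrome_eq_determined_by_entry:
  fixes \<alpha> u c c' :: "nat \<Rightarrow> 'a::field"
  assumes inj: "inj_on \<alpha> {..<n}" and u: "\<forall>i<n. u i \<noteq> 0"
    and vecs: "c \<in> vecs n" "c' \<in> vecs n"
    and syn: "syndrome n u \<alpha> c = syndrome n u \<alpha> c'"
    and card: "card (support n c \<union> support n c') \<le> 7"
    and m: "m \<in> support n c" "c m = c' m"
  shows "c = c'"
proof (rule syndrome_eq_imp_eq[OF inj u vecs syn])
  have "support n (c - c') \<subseteq> support n c \<union> support n c' - {m}"
    using support_diff_subset m by (fastforce simp: support_def)
  then have "card (support n (c - c')) \<le> card (support n c \<union> support n c' - {m})"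
    by (simp add: card_mono)
  also have "\<dots> \<le> 6"
    using card m by (simp add: card_Diff_singleton)
  finally show "hweight n (c - c') \<le> 6"
    by (simp add: hweight_eq_card_support)
qed

definition codewords_with_support ::
    "nat \<Rightarrow> (nat \<Rightarrow> 'a::field) \<Rightarrow> (nat \<Rightarrow> 'a) \<Rightarrow> nat set \<Rightarrow> (nat \<Rightarrow> 'a) set" where
  "codewords_with_support n u \<alpha> W = {c \<in> vecs n. syndrome n u \<alpha> c = (\<lambda>_. 0) \<and> support n c = W}"

lemma card_codewords_with_support_le:
  fixes \<alpha> u :: "nat \<Rightarrow> 'a::{finite,field}"
  assumes inj: "inj_on \<alpha> {..<n}" and u: "\<forall>i<n. u i \<noteq> 0" and W: "card W = 7"
  shows "finite (codewords_with_support n u \<alpha> W)"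
    and "card (codewords_with_support n u \<alpha> W) \<le> CARD('a) - 1"
proof -
  let ?C = "codewords_with_support n u \<alpha> W"
  obtain m where m: "m \<in> W"
    using W by fastforce
  have "inj_on (\<lambda>c. c m) ?C"
  proof (rule inj_onI)
    fix c c' assume "c \<in> ?C" "c' \<in> ?C" "c m = c' m"
    then show "c = c'"
      using syndrome_eq_determined_by_entry[OF inj u, of c c' m] m W
      by (simp add: codewords_with_support_def)
  qed
  moreover have "(\<lambda>c. c m) ` ?C \<subseteq> UNIV - {0}"
    using m by (auto simp: codewords_with_support_def support_def)
  ultimately show "finite ?C" and "card ?C \<le> CARD('a) - 1"
    using card_inj_on_le[of "\<lambda>c. c m" ?C "UNIV - {0}"] inj_on_finite[of "\<lambda>c. c m" ?C]
    by (simp_all add: card_Diff_singleton)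
qed

definition disjoint_subset_pairs :: "'a set \<Rightarrow> nat \<Rightarrow> nat \<Rightarrow> ('a set \<times> 'a set) set" where
  "disjoint_subset_pairs A k l = {(S, T). S \<subseteq> A \<and> card S = k \<and> T \<subseteq> A - S \<and> card T = l}"

lemma finite_disjoint_subset_pairs: "finite A \<Longrightarrow> finite (disjoint_subset_pairs A k l)"
  by (rule finite_subset[of _ "Pow A \<times> Pow A"]) (auto simp: disjoint_subset_pairs_def)

lemma card_disjoint_subset_pairs:
  assumes "finite A"
  shows "card (disjoint_subset_pairs A k l) = (card A choose k) * ((card A - k) choose l)"
proof -
  have "disjoint_subset_pairs A k l
      = (SIGMA S:{S. S \<subseteq> A \<and> card S = k}. {T. T \<subseteq> A - S \<and> card T = l})"
    by (auto simp: disjoint_subset_pairs_def)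
  also have "card \<dots> = (\<Sum>S | S \<subseteq> A \<and> card S = k. card {T. T \<subseteq> A - S \<and> card T = l})"
    using assms by (intro card_SigmaI) auto
  also have "\<dots> = (\<Sum>S | S \<subseteq> A \<and> card S = k. (card A - k) choose l)"
    using assms by (intro sum.cong refl) (auto simp: n_subsets card_Diff_subset finite_subset)
  finally show ?thesis
    using assms by (simp add: n_subsets)
qed

lemma card_Sigma_codewords_with_support_le:
  fixes \<alpha> u :: "nat \<Rightarrow> 'a::{finite,field}"
  assumes inj: "inj_on \<alpha> {..<n}" and u: "\<forall>i<n. u i \<noteq> 0" and "k + l = 7"
  defines "C \<equiv> SIGMA p:disjoint_subset_pairs {..<n} k l. codewords_with_support n u \<alpha> (fst p \<union> snd p)"
  shows "finite C" and "card C \<le> (n choose k) * ((n - k) choose l) * (CARD('a) - 1)"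
proof -
  have "card (S \<union> T) = 7" if "(S, T) \<in> disjoint_subset_pairs {..<n} k l" for S T
  proof -
    have "finite S" "finite T" "S \<inter> T = {}" "card S + card T = 7"
      using that \<open>k + l = 7\<close> finite_subset[of _ "{..<n}"] by (auto simp: disjoint_subset_pairs_def)
    then show ?thesis
      by (simp add: card_Un_disjoint)
  qed
  then have codewords: "finite (codewords_with_support n u \<alpha> (fst p \<union> snd p))"
    "card (codewords_with_support n u \<alpha> (fst p \<union> snd p)) \<le> CARD('a) - 1"
    if "p \<in> disjoint_subset_pairs {..<n} k l" for p
    using that card_codewords_with_support_le[OF inj u] by (metis prod.collapse)+
  then show "finite C"
    unfolding C_def by (intro finite_SigmaI finite_disjoint_subset_pairs) auto
  have "card C = (\<Sum>p\<in>disjoint_subset_pairs {..<n} k l. card (codewords_with_support n u \<alpha> (fst p \<union> snd p)))"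
    unfolding C_def using codewords(1) by (intro card_SigmaI finite_disjoint_subset_pairs) auto
  also have "\<dots> \<le> card (disjoint_subset_pairs {..<n} k l) * (CARD('a) - 1)"
    using sum_bounded_above[OF codewords(2)] by simp
  finally show "card C \<le> (n choose k) * ((n - k) choose l) * (CARD('a) - 1)"
    by (simp add: card_disjoint_subset_pairs)
qed

lemma restrict_diff_of_disjoint_support:
  fixes e e' :: "nat \<Rightarrow> 'a::group_add"
  assumes "e \<in> vecs n" and "support n e \<inter> support n e' = {}"
  shows "e i = (if i \<in> support n e then (e - e') i else 0)"
  using assms by (cases "i < n") (auto simp: support_def vecs_def)

lemma eq_if_diff_eq_and_disjoint_support:
  fixes e1 e1' e2 e2' :: "nat \<Rightarrow> 'a::group_add"
  assumes "e1 \<in> vecs n" "e2 \<in> vecs n"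
    and "support n e1 \<inter> support n e1' = {}" "support n e2 \<inter> support n e2' = {}"
    and "support n e1 = support n e2" and "e1 - e1' = e2 - e2'"
  shows "e1 = e2"
proof
  fix i
  have "e1 i = (if i \<in> support n e1 then (e1 - e1') i else 0)"
    using assms(1,3) by (rule restrict_diff_of_disjoint_support)
  also have "\<dots> = (if i \<in> support n e2 then (e2 - e2') i else 0)"
    by (simp only: assms(5,6))
  also have "\<dots> = e2 i"
    using assms(2,4) by (rule restrict_diff_of_disjoint_support[symmetric])
  finally show "e1 i = e2 i" .
qed

lemma syndrome_eq_weight_4_weight_le_3:
  fixes \<alpha> u e e' :: "nat \<Rightarrow> 'a::field"
  assumes inj: "inj_on \<alpha> {..<n}" and u: "\<forall>i<n. u i \<noteq> 0"
    and vecs: "e \<in> vecs n" "e' \<in> vecs n" and syn: "syndrome n u \<alpha> e = syndrome n u \<alpha> e'"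
    and weights: "hweight n e = 4" "hweight n e' \<le> 3"
  shows "support n e \<inter> support n e' = {}"
    and "(support n e, support n e') \<in> disjoint_subset_pairs {..<n} 4 3"
    and "e - e' \<in> codewords_with_support n u \<alpha> (support n e \<union> support n e')"
proof -
  have "e \<noteq> e'"
    using weights by auto
  note pair = syndrome_eq_weight_sum_le_7[OF inj u vecs syn this]
  show "support n e \<inter> support n e' = {}"
    using pair(1) weights by simp
  then show "(support n e, support n e') \<in> disjoint_subset_pairs {..<n} 4 3"
    using pair(2) weights support_subset_lessThan[of n]
    by (auto simp: disjoint_subset_pairs_def hweight_eq_card_support)
  show "e - e' \<in> codewords_with_support n u \<alpha> (support n e \<union> support n e')"
    using vecs syn pair(3) weights
    by (simp add: codewords_with_support_def vecs_diff syndrome_diff fun_eq_iff)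
qed

lemma card_weight_4_syndrome_of_weight_le_3:
  fixes \<alpha> u :: "nat \<Rightarrow> 'a::{finite,field}"
  assumes inj: "inj_on \<alpha> {..<n}" and u: "\<forall>i<n. u i \<noteq> 0"
  shows "card {e \<in> vecs n. hweight n e = 4 \<and>
            (\<exists>e' \<in> vecs n. hweight n e' \<le> 3 \<and> syndrome n u \<alpha> e' = syndrome n u \<alpha> e)}
    \<le> (n choose 4) * ((n - 4) choose 3) * (CARD('a) - 1)"
    (is "card ?A \<le> _")
proof -
  define partner where "partner e =
    (SOME e'. e' \<in> vecs n \<and> hweight n e' \<le> 3 \<and> syndrome n u \<alpha> e' = syndrome n u \<alpha> e)" for e
  have pair: "support n e \<inter> support n (partner e) = {}"
      "(support n e, support n (partner e)) \<in> disjoint_subset_pairs {..<n} 4 3"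
      "e - partner e \<in> codewords_with_support n u \<alpha> (support n e \<union> support n (partner e))"
    if "e \<in> ?A" for e
  proof -
    have "\<exists>e'. e' \<in> vecs n \<and> hweight n e' \<le> 3 \<and> syndrome n u \<alpha> e' = syndrome n u \<alpha> e"
      using that by blast
    then have "partner e \<in> vecs n \<and> hweight n (partner e) \<le> 3
        \<and> syndrome n u \<alpha> (partner e) = syndrome n u \<alpha> e"
      unfolding partner_def by (rule someI_ex)
    with that show "support n e \<inter> support n (partner e) = {}"
      "(support n e, support n (partner e)) \<in> disjoint_subset_pairs {..<n} 4 3"
      "e - partner e \<in> codewords_with_support n u \<alpha> (support n e \<union> support n (partner e))"
      using syndrome_eq_weight_4_weight_le_3[OF inj u, of e "partner e"] by simp_all
  qed
  define g where "g e = ((support n e, support n (partner e)), e - partner e)" for e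
  define C where "C = (SIGMA p:disjoint_subset_pairs {..<n} 4 3.
      codewords_with_support n u \<alpha> (fst p \<union> snd p))"
  have g_mem: "g e \<in> C" if "e \<in> ?A" for e
    using pair(2,3)[OF that] by (simp add: g_def C_def)
  have g_inj: "inj_on g ?A"
  proof (rule inj_onI)
    fix e1 e2 assume e1: "e1 \<in> ?A" and e2: "e2 \<in> ?A" and "g e1 = g e2"
    then have "support n e1 = support n e2" "e1 - partner e1 = e2 - partner e2"
      by (simp_all add: g_def)
    then show "e1 = e2"
      using eq_if_diff_eq_and_disjoint_support[OF _ _ pair(1)[OF e1] pair(1)[OF e2]] e1 e2
      by simp
  qed
  have "finite C"
    unfolding C_def by (rule card_Sigma_codewords_with_support_le(1)[OF inj u]) simp
  with g_inj g_mem have "card ?A \<le> card C"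
    by (intro card_inj_on_le image_subsetI)
  also have "\<dots> \<le> (n choose 4) * ((n - 4) choose 3) * (CARD('a) - 1)"
    unfolding C_def by (rule card_Sigma_codewords_with_support_le(2)[OF inj u]) simp
  finally show ?thesis .
qed

lemma real_choose_3: "real (m choose 3) = real m * (real m - 1) * (real m - 2) / 6"
  by (simp add: binomial_gbinomial gbinomial_Suc numeral_3_eq_3 atLeast0AtMost atMost_Suc algebra_simps)

theorem mainTheorem12:
  fixes \<alpha> u :: "nat \<Rightarrow> 'a::{finite,field}" and n :: nat
  assumes "7 \<le> n" and "n \<le> CARD('a)"
    and "inj_on \<alpha> {..<n}"
    and "\<forall>i<n. u i \<noteq> 0"
  shows "real (card {e \<in> vecs n. hweight n e = 4 \<and>
            (\<exists>e' \<in> vecs n. hweight n e' \<le> 3 \<and> syndrome n u \<alpha> e' = syndrome n u \<alpha> e)})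
         \<le> (real n - 4) * (real n - 5) * (real n - 6) / (6 * (real CARD('a) - 1) ^ 3)
            * (real CARD('a) - 1) ^ 4 * real (n choose 4)"
proof -
  define q where "q = real CARD('a) - 1"
  have card_minus_1: "real (CARD('a) - 1) = q" and "q \<noteq> 0"
    using assms(1,2) by (simp_all add: q_def)
  have choose_3: "real ((n - 4) choose 3) = (real n - 4) * (real n - 5) * (real n - 6) / 6"
    using assms(1) by (simp add: real_choose_3 algebra_simps)
  have "real (card {e \<in> vecs n. hweight n e = 4 \<and>
            (\<exists>e' \<in> vecs n. hweight n e' \<le> 3 \<and> syndrome n u \<alpha> e' = syndrome n u \<alpha> e)})
      \<le> real ((n choose 4) * ((n - 4) choose 3) * (CARD('a) - 1))"
    using card_weight_4_syndrome_of_weight_le_3[OF assms(3,4)] by (rule of_nat_mono)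
  also have "\<dots> = real (n choose 4) * ((real n - 4) * (real n - 5) * (real n - 6) / 6) * q"
    by (simp only: of_nat_mult choose_3 card_minus_1)
  also have "\<dots> = (real n - 4) * (real n - 5) * (real n - 6) / (6 * q ^ 3) * q ^ 4 * real (n choose 4)"
    using \<open>q \<noteq> 0\<close> by (simp add: field_simps eval_nat_numeral)
  finally show ?thesis
    unfolding q_def .
qed

end
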